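(* Let $a<b$, let $p,q\in[1,\infty]$ be conjugate exponents, and let $f\colon[a,b]\to\mathbb{R}$ be absolutely continuous with $f'\in L^p([a,b])$. Define $E_1(f)=\int_a^b f(x)\,dx-\frac{b-a}{2}[f(a)+f(b)]$. Then $$|E_1(f)|\leq \begin{cases}\frac12\|f'\|_1(b-a), & p=1,\\ \frac12\left(\frac{1}{q+1}\right)^{1/q}\|f'\|_p(b-a)^{1+1/q}, & 1<p<\infty,\\ \frac14\|f'\|_\infty(b-a)^2, & p=\infty,\end{cases}$$ and these estimates are sharp: in each case the coefficient of the norm of $f'$ cannot be reduced.
   Context: Norms are Lebesgue $L^p$ norms over $[a,b]$ ($\|\cdot\|_\infty$ is the essential supremum). Conjugate exponents satisfy $1/p+1/q=1$ with $1/\infty=0$. *)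

theory Defs
  imports "HOL-Analysis.Analysis"
begin

definition abs_continuous_on :: "real \<Rightarrow> real \<Rightarrow> (real \<Rightarrow> real) \<Rightarrow> bool" where
  "abs_continuous_on a b f \<longleftrightarrow>
     (\<forall>\<epsilon>>0. \<exists>\<delta>>0. \<forall>(n::nat) (x::nat \<Rightarrow> real) (y::nat \<Rightarrow> real).
        (\<forall>i<n. a \<le> x i \<and> x i \<le> y i \<and> y i \<le> b) \<and>
        (\<forall>i<n. \<forall>j<n. i \<noteq> j \<longrightarrow> y i \<le> x j \<or> y j \<le> x i) \<and>
        (\<Sum>i<n. y i - x i) < \<delta>
        \<longrightarrow> (\<Sum>i<n. \<bar>f (y i) - f (x i)\<bar>) < \<epsilon>)"

definition conjugate_exponents :: "ereal \<Rightarrow> ereal \<Rightarrow> bool" where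
  "conjugate_exponents p q \<longleftrightarrow>
     (p = 1 \<and> q = \<infinity>) \<or> (p = \<infinity> \<and> q = 1) \<or>
     (1 < p \<and> p < \<infinity> \<and> 1 < q \<and> q < \<infinity> \<and>
      1 / real_of_ereal p + 1 / real_of_ereal q = 1)"

definition memLp :: "ereal \<Rightarrow> real \<Rightarrow> real \<Rightarrow> (real \<Rightarrow> real) \<Rightarrow> bool" where
  "memLp p a b g \<longleftrightarrow> g \<in> borel_measurable (lebesgue_on {a..b}) \<and>
     (if p = \<infinity> then (\<exists>C. AE x in lebesgue_on {a..b}. \<bar>g x\<bar> \<le> C)
      else integrable (lebesgue_on {a..b}) (\<lambda>x. \<bar>g x\<bar> powr real_of_ereal p))"

definition Lp_norm :: "ereal \<Rightarrow> real \<Rightarrow> real \<Rightarrow> (real \<Rightarrow> real) \<Rightarrow> real" where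
  "Lp_norm p a b g =
     (if p = \<infinity> then Inf {C. 0 \<le> C \<and> (AE x in lebesgue_on {a..b}. \<bar>g x\<bar> \<le> C)}
      else (integral\<^sup>L (lebesgue_on {a..b}) (\<lambda>x. \<bar>g x\<bar> powr real_of_ereal p))
             powr (1 / real_of_ereal p))"

definition E1 :: "real \<Rightarrow> real \<Rightarrow> (real \<Rightarrow> real) \<Rightarrow> real" where
  "E1 a b f = integral {a..b} f - (b - a) / 2 * (f a + f b)"

definition trap_coeff :: "ereal \<Rightarrow> ereal \<Rightarrow> real" where
  "trap_coeff p q =
     (if p = 1 then 1/2
      else if p = \<infinity> then 1/4
      else 1/2 * (1 / (real_of_ereal q + 1)) powr (1 / real_of_ereal q))"

definition trap_expo :: "ereal \<Rightarrow> ereal \<Rightarrow> real" where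
  "trap_expo p q =
     (if p = 1 then 1
      else if p = \<infinity> then 2
      else 1 + 1 / real_of_ereal q)"

end

theory Submission
  imports Defs
begin

text \<open>Integration by parts against the Peano kernel \<open>x - (a + b) / 2\<close> gives
  \<open>E1 a b f = - \<integral>\<^sub>a\<^sup>b (x - (a + b) / 2) f' x dx\<close>, so \<open>|E1 a b f|\<close> is at most the integral of
  \<open>|x - (a + b) / 2| |f'|\<close>, which H\<ouml>lder's inequality bounds by the \<open>L\<^sup>q\<close> norm of the kernel times
  the \<open>L\<^sup>p\<close> norm of \<open>f'\<close>. The functions \<open>|x - (a + b) / 2|\<^sup>r / r\<close> show sharpness: for \<open>r = q\<close>
  their derivative attains equality in H\<ouml>lder's inequality, \<open>r = 1\<close> attains the bound for
  \<open>p = \<infinity>\<close>, and as \<open>r \<rightarrow> \<infinity>\<close> they approach the bound for \<open>p = 1\<close>. Integration by parts needs the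
  fundamental theorem of calculus for absolutely continuous functions, proved by a gauge integral
  argument.\<close>

section \<open>Absolute continuity\<close>

lemma abs_continuous_on_imp_continuous_on:
  assumes "abs_continuous_on a b f"
  shows "continuous_on {a..b} f"
  unfolding continuous_on_iff
proof (intro ballI allI impI)
  fix x e :: real assume x: "x \<in> {a..b}" and "0 < e"
  then obtain d where "d > 0" and d: "\<forall>(n::nat) u v. (\<forall>i<n. a \<le> u i \<and> u i \<le> v i \<and> v i \<le> b) \<and>
      (\<forall>i<n. \<forall>j<n. i \<noteq> j \<longrightarrow> v i \<le> u j \<or> v j \<le> u i) \<and> (\<Sum>i<n. v i - u i) < d
      \<longrightarrow> (\<Sum>i<n. \<bar>f (v i) - f (u i)\<bar>) < e"
    using assms unfolding abs_continuous_on_def by blast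
  have close: "\<bar>f t - f s\<bar> < e" if "a \<le> s" "s \<le> t" "t \<le> b" "t - s < d" for s t
    using d[rule_format, of 1 "\<lambda>_. s" "\<lambda>_. t"] that by auto
  show "\<exists>d>0. \<forall>y\<in>{a..b}. dist y x < d \<longrightarrow> dist (f y) (f x) < e"
  proof (intro exI conjI ballI impI)
    fix y assume "y \<in> {a..b}" "dist y x < d"
    then show "dist (f y) (f x) < e"
      using close[of x y] close[of y x] x by (cases "x \<le> y") (auto simp: dist_real_def abs_minus_commute)
  qed (fact \<open>d > 0\<close>)
qed

lemma abs_continuous_on_bounded:
  assumes "abs_continuous_on a b f"
  obtains M where "M \<ge> 0" "\<And>x. x \<in> {a..b} \<Longrightarrow> \<bar>f x\<bar> \<le> M"
proof -
  have "bounded (f ` {a..b})"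
    by (intro compact_imp_bounded compact_continuous_image abs_continuous_on_imp_continuous_on assms) simp
  then obtain M where "\<And>x. x \<in> {a..b} \<Longrightarrow> \<bar>f x\<bar> \<le> M"
    unfolding bounded_real by blast
  then show ?thesis
    using that[of "max M 0"] by fastforce
qed

text \<open>Degenerate intervals are exempt from the non-overlap condition, as tagged divisions may
  contain them.\<close>
lemma abs_continuous_on_interval_family:
  assumes "abs_continuous_on a b f" "e > 0"
  obtains d where "d > 0"
    "\<And>(I :: 'i set) u v. finite I \<Longrightarrow> \<forall>i\<in>I. a \<le> u i \<and> u i \<le> v i \<and> v i \<le> b \<Longrightarrow>
       \<forall>i\<in>I. \<forall>j\<in>I. i \<noteq> j \<longrightarrow> u i < v i \<longrightarrow> u j < v j \<longrightarrow> v i \<le> u j \<or> v j \<le> u i \<Longrightarrow>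
       (\<Sum>i\<in>I. v i - u i) < d \<Longrightarrow> (\<Sum>i\<in>I. \<bar>f (v i) - f (u i)\<bar>) < e"
proof -
  obtain d where "d > 0" and d: "\<forall>(n::nat) X Y. (\<forall>k<n. a \<le> X k \<and> X k \<le> Y k \<and> Y k \<le> b) \<and>
      (\<forall>k<n. \<forall>l<n. k \<noteq> l \<longrightarrow> Y k \<le> X l \<or> Y l \<le> X k) \<and> (\<Sum>k<n. Y k - X k) < d
      \<longrightarrow> (\<Sum>k<n. \<bar>f (Y k) - f (X k)\<bar>) < e"
    using assms unfolding abs_continuous_on_def by blast
  show ?thesis
  proof (rule that[OF \<open>d > 0\<close>])
    fix I and u v :: "_ \<Rightarrow> real"
    assume fin: "finite I" and inside: "\<forall>i\<in>I. a \<le> u i \<and> u i \<le> v i \<and> v i \<le> b"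
      and apart: "\<forall>i\<in>I. \<forall>j\<in>I. i \<noteq> j \<longrightarrow> u i < v i \<longrightarrow> u j < v j \<longrightarrow> v i \<le> u j \<or> v j \<le> u i"
      and small: "(\<Sum>i\<in>I. v i - u i) < d"
    define J where "J = {i \<in> I. u i < v i}"
    have degenerate: "u i = v i" if "i \<in> I - J" for i
      using inside that by (force simp: J_def)
    have sum_J: "(\<Sum>i\<in>I. G (u i) (v i)) = (\<Sum>i\<in>J. G (u i) (v i))"
      if "\<And>t. G t t = 0" for G :: "real \<Rightarrow> real \<Rightarrow> real"
    proof (rule sum.mono_neutral_right)
      show "\<forall>i\<in>I - J. G (u i) (v i) = 0" using degenerate that by simp
    qed (use fin in \<open>auto simp: J_def\<close>)
    obtain h where h: "bij_betw h {..<card J} J"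
      using ex_bij_betw_nat_finite[of J] fin by (auto simp: J_def lessThan_atLeast0)
    have sum_h: "(\<Sum>k<card J. G (u (h k)) (v (h k))) = (\<Sum>i\<in>J. G (u i) (v i))" for G :: "real \<Rightarrow> real \<Rightarrow> real"
      using sum.reindex_bij_betw[OF h, of "\<lambda>i. G (u i) (v i)"] .
    have hJ: "h k \<in> J" if "k < card J" for k
      using h that bij_betwE by blast
    have "(\<Sum>k<card J. \<bar>f (v (h k)) - f (u (h k))\<bar>) < e"
    proof (rule d[rule_format], intro conjI allI impI)
      fix k assume "k < card J"
      then show "a \<le> u (h k)" "u (h k) \<le> v (h k)" "v (h k) \<le> b"
        using hJ inside by (auto simp: J_def)
    next
      fix k l assume "k < card J" "l < card J" "k \<noteq> l"
      then have "h k \<noteq> h l"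
        using bij_betw_imp_inj_on[OF h] by (simp add: inj_on_eq_iff)
      then show "v (h k) \<le> u (h l) \<or> v (h l) \<le> u (h k)"
        using hJ[of k] hJ[of l] \<open>k < card J\<close> \<open>l < card J\<close> apart by (auto simp: J_def)
    next
      show "(\<Sum>k<card J. v (h k) - u (h k)) < d"
        using small sum_h[of "\<lambda>s t. t - s"] sum_J[of "\<lambda>s t. t - s"] by simp
    qed
    then show "(\<Sum>i\<in>I. \<bar>f (v i) - f (u i)\<bar>) < e"
      using sum_h[of "\<lambda>s t. \<bar>f t - f s\<bar>"] sum_J[of "\<lambda>s t. \<bar>f t - f s\<bar>"] by simp
  qed
qed

lemma abs_continuous_on_Lipschitz:
  fixes f :: "real \<Rightarrow> real"
  assumes "L \<ge> 0" and lip: "\<And>x y. x \<in> {a..b} \<Longrightarrow> y \<in> {a..b} \<Longrightarrow> \<bar>f y - f x\<bar> \<le> L * \<bar>y - x\<bar>"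
  shows "abs_continuous_on a b f"
  unfolding abs_continuous_on_def
proof (intro allI impI exI conjI)
  fix \<epsilon> :: real assume "\<epsilon> > 0"
  then show "\<epsilon> / (L + 1) > 0" using \<open>L \<ge> 0\<close> by simp
  fix n :: nat and x y :: "nat \<Rightarrow> real"
  assume A: "(\<forall>i<n. a \<le> x i \<and> x i \<le> y i \<and> y i \<le> b) \<and>
    (\<forall>i<n. \<forall>j<n. i \<noteq> j \<longrightarrow> y i \<le> x j \<or> y j \<le> x i) \<and> (\<Sum>i<n. y i - x i) < \<epsilon> / (L + 1)"
  have "(\<Sum>i<n. \<bar>f (y i) - f (x i)\<bar>) \<le> (\<Sum>i<n. L * (y i - x i))"
  proof (rule sum_mono)
    fix i assume "i \<in> {..<n}"
    then have "a \<le> x i" "x i \<le> y i" "y i \<le> b" using A by auto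
    then show "\<bar>f (y i) - f (x i)\<bar> \<le> L * (y i - x i)" using lip[of "x i" "y i"] by simp
  qed
  also have "\<dots> = L * (\<Sum>i<n. y i - x i)" by (simp add: sum_distrib_left)
  also have "\<dots> \<le> L * (\<epsilon> / (L + 1))" using A \<open>L \<ge> 0\<close> by (intro mult_left_mono) auto
  also have "\<dots> < \<epsilon>" using \<open>L \<ge> 0\<close> \<open>\<epsilon> > 0\<close> by (simp add: field_simps)
  finally show "(\<Sum>i<n. \<bar>f (y i) - f (x i)\<bar>) < \<epsilon>" .
qed

lemma abs_continuous_on_mult:
  fixes f g :: "real \<Rightarrow> real"
  assumes f: "abs_continuous_on a b f" and g: "abs_continuous_on a b g"
  shows "abs_continuous_on a b (\<lambda>x. f x * g x)"
  unfolding abs_continuous_on_def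
proof (intro allI impI)
  obtain Mf where Mf: "Mf \<ge> 0" "\<And>x. x \<in> {a..b} \<Longrightarrow> \<bar>f x\<bar> \<le> Mf"
    using abs_continuous_on_bounded[OF f] by blast
  obtain Mg where Mg: "Mg \<ge> 0" "\<And>x. x \<in> {a..b} \<Longrightarrow> \<bar>g x\<bar> \<le> Mg"
    using abs_continuous_on_bounded[OF g] by blast
  fix \<epsilon> :: real assume "\<epsilon> > 0"
  obtain df where "df > 0" and
    df: "\<forall>(n::nat) x y. (\<forall>i<n. a \<le> x i \<and> x i \<le> y i \<and> y i \<le> b) \<and>
      (\<forall>i<n. \<forall>j<n. i \<noteq> j \<longrightarrow> y i \<le> x j \<or> y j \<le> x i) \<and> (\<Sum>i<n. y i - x i) < df
      \<longrightarrow> (\<Sum>i<n. \<bar>f (y i) - f (x i)\<bar>) < \<epsilon> / (2 * (Mg + 1))"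
    using f[unfolded abs_continuous_on_def, rule_format, of "\<epsilon> / (2 * (Mg + 1))"] \<open>\<epsilon> > 0\<close> Mg(1)
    by auto
  obtain dg where "dg > 0" and
    dg: "\<forall>(n::nat) x y. (\<forall>i<n. a \<le> x i \<and> x i \<le> y i \<and> y i \<le> b) \<and>
      (\<forall>i<n. \<forall>j<n. i \<noteq> j \<longrightarrow> y i \<le> x j \<or> y j \<le> x i) \<and> (\<Sum>i<n. y i - x i) < dg
      \<longrightarrow> (\<Sum>i<n. \<bar>g (y i) - g (x i)\<bar>) < \<epsilon> / (2 * (Mf + 1))"
    using g[unfolded abs_continuous_on_def, rule_format, of "\<epsilon> / (2 * (Mf + 1))"] \<open>\<epsilon> > 0\<close> Mf(1)
    by auto
  show "\<exists>\<delta>>0. \<forall>(n::nat) x y. (\<forall>i<n. a \<le> x i \<and> x i \<le> y i \<and> y i \<le> b) \<and>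
      (\<forall>i<n. \<forall>j<n. i \<noteq> j \<longrightarrow> y i \<le> x j \<or> y j \<le> x i) \<and> (\<Sum>i<n. y i - x i) < \<delta>
      \<longrightarrow> (\<Sum>i<n. \<bar>f (y i) * g (y i) - f (x i) * g (x i)\<bar>) < \<epsilon>"
  proof (intro exI[of _ "min df dg"] conjI allI impI)
    show "min df dg > 0" using \<open>df > 0\<close> \<open>dg > 0\<close> by simp
    fix n :: nat and x y :: "nat \<Rightarrow> real"
    assume A: "(\<forall>i<n. a \<le> x i \<and> x i \<le> y i \<and> y i \<le> b) \<and>
      (\<forall>i<n. \<forall>j<n. i \<noteq> j \<longrightarrow> y i \<le> x j \<or> y j \<le> x i) \<and> (\<Sum>i<n. y i - x i) < min df dg"
    have sf: "(\<Sum>i<n. \<bar>f (y i) - f (x i)\<bar>) < \<epsilon> / (2 * (Mg + 1))"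
      and sg: "(\<Sum>i<n. \<bar>g (y i) - g (x i)\<bar>) < \<epsilon> / (2 * (Mf + 1))"
      using A df dg by auto
    have "(\<Sum>i<n. \<bar>f (y i) * g (y i) - f (x i) * g (x i)\<bar>)
        \<le> (\<Sum>i<n. Mf * \<bar>g (y i) - g (x i)\<bar> + Mg * \<bar>f (y i) - f (x i)\<bar>)"
    proof (rule sum_mono)
      fix i assume "i \<in> {..<n}"
      then have xy: "x i \<in> {a..b}" "y i \<in> {a..b}" using A by auto
      have "\<bar>f (y i) * g (y i) - f (x i) * g (x i)\<bar>
          = \<bar>f (y i) * (g (y i) - g (x i)) + g (x i) * (f (y i) - f (x i))\<bar>"
        by (simp add: algebra_simps)
      also have "\<dots> \<le> \<bar>f (y i)\<bar> * \<bar>g (y i) - g (x i)\<bar> + \<bar>g (x i)\<bar> * \<bar>f (y i) - f (x i)\<bar>"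
        using abs_triangle_ineq[of "f (y i) * (g (y i) - g (x i))" "g (x i) * (f (y i) - f (x i))"]
        by (simp add: abs_mult)
      also have "\<dots> \<le> Mf * \<bar>g (y i) - g (x i)\<bar> + Mg * \<bar>f (y i) - f (x i)\<bar>"
        using xy Mf Mg by (intro add_mono mult_right_mono) auto
      finally show "\<bar>f (y i) * g (y i) - f (x i) * g (x i)\<bar> \<le> \<dots>" .
    qed
    also have "\<dots> = Mf * (\<Sum>i<n. \<bar>g (y i) - g (x i)\<bar>) + Mg * (\<Sum>i<n. \<bar>f (y i) - f (x i)\<bar>)"
      by (simp add: sum.distrib sum_distrib_left)
    also have "\<dots> \<le> Mf * (\<epsilon> / (2 * (Mf + 1))) + Mg * (\<epsilon> / (2 * (Mg + 1)))"
      using sf sg Mf Mg by (intro add_mono mult_left_mono) auto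
    also have "\<dots> < \<epsilon> / 2 + \<epsilon> / 2"
      using Mf(1) Mg(1) \<open>\<epsilon> > 0\<close> by (intro add_strict_mono) (simp_all add: field_simps)
    finally show "(\<Sum>i<n. \<bar>f (y i) * g (y i) - f (x i) * g (x i)\<bar>) < \<epsilon>" by simp
  qed
qed

section \<open>The fundamental theorem of calculus for absolutely continuous functions\<close>

lemma sum_nonoverlapping_intervals_le_measure:
  fixes u v :: "'i \<Rightarrow> real"
  assumes fin: "finite I" and sub: "\<forall>i\<in>I. u i \<le> v i \<and> {u i..v i} \<subseteq> T" and T: "T \<in> lmeasurable"
    and apart: "\<forall>i\<in>I. \<forall>j\<in>I. i \<noteq> j \<longrightarrow> u i < v i \<longrightarrow> u j < v j \<longrightarrow> v i \<le> u j \<or> v j \<le> u i"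
  shows "(\<Sum>i\<in>I. v i - u i) \<le> measure lebesgue T"
proof -
  have "(\<Sum>i\<in>I. v i - u i) = (\<Sum>i\<in>I. measure lebesgue {u i..v i})"
    using sub by (intro sum.cong) auto
  also have "\<dots> = measure lebesgue (\<Union>i\<in>I. {u i..v i})"
  proof (rule measure_negligible_finite_Union_image[symmetric, OF fin])
    show "pairwise (\<lambda>i j. negligible ({u i..v i} \<inter> {u j..v j})) I"
    proof (rule pairwiseI)
      fix i j assume "i \<in> I" "j \<in> I" "i \<noteq> j"
      then have "{u i..v i} \<inter> {u j..v j} \<subseteq> {u i, v i, u j, v j}"
      proof (cases "u i < v i \<and> u j < v j")
        case True
        then have "v i \<le> u j \<or> v j \<le> u i" using apart \<open>i \<in> I\<close> \<open>j \<in> I\<close> \<open>i \<noteq> j\<close> by blast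
        then show ?thesis by auto
      next
        case False
        then have "u i = v i \<or> u j = v j" using sub \<open>i \<in> I\<close> \<open>j \<in> I\<close> by force
        then show ?thesis by auto
      qed
      then show "negligible ({u i..v i} \<inter> {u j..v j})"
        by (rule negligible_subset[rotated]) simp
    qed
  qed auto
  also have "\<dots> \<le> measure lebesgue T"
    using sub T fin by (intro measure_mono_fmeasurable sets.finite_UN) auto
  finally show ?thesis .
qed

lemma tagged_division_of_realE:
  assumes "p tagged_division_of {a..b::real}" "(x, K) \<in> p"
  obtains u v where "K = {u..v}" "u \<le> v" "x \<in> K" "K \<subseteq> {a..b}"
proof -
  obtain u v where "K = cbox u v" using assms tagged_division_ofD(4) by blast
  moreover have "x \<in> K" "K \<subseteq> {a..b}" using assms tagged_division_ofD(2,3) by blast+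
  ultimately show ?thesis using that[of u v] by auto
qed

lemma tagged_division_of_real_nonoverlapping:
  assumes p: "p tagged_division_of {a..b::real}" and xK: "(x, K) \<in> p" "(x', K') \<in> p" "(x, K) \<noteq> (x', K')"
    and "Inf K < Sup K" "Inf K' < Sup K'"
  shows "Sup K \<le> Inf K' \<or> Sup K' \<le> Inf K"
proof -
  obtain u v where K: "K = {u..v}" "u \<le> v" using tagged_division_of_realE[OF p xK(1)] by metis
  obtain u' v' where K': "K' = {u'..v'}" "u' \<le> v'" using tagged_division_of_realE[OF p xK(2)] by metis
  have "u < v" "u' < v'" using assms(5,6) K K' by simp_all
  have "{u<..<v} \<inter> {u'<..<v'} = {}"
    using tagged_division_ofD(5)[OF p xK] K K' by simp
  have "v \<le> u' \<or> v' \<le> u"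
  proof (rule ccontr)
    assume "\<not> (v \<le> u' \<or> v' \<le> u)"
    then have "(max u u' + min v v') / 2 \<in> {u<..<v} \<inter> {u'<..<v'}"
      using \<open>u < v\<close> \<open>u' < v'\<close> by auto
    with \<open>{u<..<v} \<inter> {u'<..<v'} = {}\<close> show False by blast
  qed
  then show ?thesis using K K' by simp
qed

lemma has_real_derivative_local_linear:
  assumes "(f has_real_derivative f') (at x)" "e > 0"
  obtains d where "d > 0" "\<And>y. \<bar>y - x\<bar> < d \<Longrightarrow> \<bar>f y - f x - (y - x) * f'\<bar> \<le> e * \<bar>y - x\<bar>"
proof -
  have "(f has_derivative (\<lambda>h. f' * h)) (at x)"
    using assms(1) by (simp add: has_field_derivative_def)
  then obtain d where "d > 0" "\<forall>y. norm (y - x) < d \<longrightarrow> norm (f y - f x - f' * (y - x)) \<le> e * norm (y - x)"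
    using assms(2) unfolding has_derivative_at_alt by blast
  then show ?thesis using that by (auto simp: mult.commute)
qed

lemma tagged_division_of_real_straddle:
  fixes f :: "real \<Rightarrow> real"
  assumes p: "p tagged_division_of {a..b}" and xK: "(x, K) \<in> p" and "K \<subseteq> ball x d"
    and lin: "\<And>y. \<bar>y - x\<bar> < d \<Longrightarrow> \<bar>f y - f x - (y - x) * f'\<bar> \<le> e * \<bar>y - x\<bar>"
  shows "\<bar>measure lborel K * f' - (f (Sup K) - f (Inf K))\<bar> \<le> e * measure lborel K"
proof -
  obtain u v where K: "K = {u..v}" "u \<le> v" "x \<in> K"
    using tagged_division_of_realE[OF p xK] by blast
  then have "u \<in> K" "v \<in> K" by auto
  with \<open>K \<subseteq> ball x d\<close> have "u \<in> ball x d" "v \<in> ball x d" by blast+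
  then have "\<bar>u - x\<bar> < d" "\<bar>v - x\<bar> < d" by (auto simp: dist_real_def)
  have "(v - u) * f' - (f v - f u) = (f u - f x - (u - x) * f') - (f v - f x - (v - x) * f')"
    by (simp add: algebra_simps)
  then have "\<bar>(v - u) * f' - (f v - f u)\<bar> \<le> \<bar>f v - f x - (v - x) * f'\<bar> + \<bar>f u - f x - (u - x) * f'\<bar>"
    by linarith
  also have "\<dots> \<le> e * \<bar>v - x\<bar> + e * \<bar>u - x\<bar>"
    using lin \<open>\<bar>u - x\<bar> < d\<close> \<open>\<bar>v - x\<bar> < d\<close> by (intro add_mono) auto
  also have "\<dots> = e * (v - u)"
    using K by (simp add: algebra_simps)
  finally show ?thesis using K by simp
qed

lemma negligible_open_superset:
  assumes "negligible E" "\<delta> > 0"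
  obtains T where "open T" "E \<subseteq> T" "T \<in> lmeasurable" "measure lebesgue T < \<delta>"
proof -
  obtain T where T: "open T" "E \<subseteq> T" "T - E \<in> lmeasurable" "emeasure lebesgue (T - E) < ennreal \<delta>"
    using sets_lebesgue_outer_open[OF negligible_imp_sets[OF assms(1)] assms(2)] by blast
  have "T = (T - E) \<union> E" using T(2) by blast
  then have "T \<in> lmeasurable"
    using fmeasurable.Un[OF T(3) negligible_imp_measurable[OF assms(1)]] by metis
  moreover have "measure lebesgue T = measure lebesgue (T - E)"
    using assms(1) \<open>T \<in> lmeasurable\<close> by (simp add: measure_Diff_null_set negligible_iff_null_sets)
  moreover have "measure lebesgue (T - E) < \<delta>"
    using T(3,4) assms(2) by (simp add: emeasure_eq_measure2 ennreal_less_iff)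
  ultimately show ?thesis using that T(1,2) by simp
qed

lemma derivative_gauge:
  fixes f g :: "real \<Rightarrow> real"
  assumes "open T" "E \<subseteq> T" "e > 0"
    and der: "\<And>x. x \<in> S - E \<Longrightarrow> (f has_real_derivative g x) (at x)"
  obtains d where "\<And>x. d x > 0" "\<And>x. x \<in> E \<Longrightarrow> ball x (d x) \<subseteq> T"
    "\<And>x y. x \<in> S - E \<Longrightarrow> \<bar>y - x\<bar> < d x \<Longrightarrow> \<bar>f y - f x - (y - x) * g x\<bar> \<le> e * \<bar>y - x\<bar>"
proof -
  have "\<forall>x. \<exists>d>0. (x \<in> E \<longrightarrow> ball x d \<subseteq> T) \<and>
      (x \<in> S - E \<longrightarrow> (\<forall>y. \<bar>y - x\<bar> < d \<longrightarrow> \<bar>f y - f x - (y - x) * g x\<bar> \<le> e * \<bar>y - x\<bar>))"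
  proof
    fix x
    consider "x \<in> E" | "x \<in> S - E" | "x \<notin> S \<union> E" by blast
    then show "\<exists>d>0. (x \<in> E \<longrightarrow> ball x d \<subseteq> T) \<and>
      (x \<in> S - E \<longrightarrow> (\<forall>y. \<bar>y - x\<bar> < d \<longrightarrow> \<bar>f y - f x - (y - x) * g x\<bar> \<le> e * \<bar>y - x\<bar>))"
    proof cases
      case 1
      then show ?thesis using assms(1,2) open_contains_ball by blast
    next
      case 2
      moreover obtain d where "d > 0" "\<And>y. \<bar>y - x\<bar> < d \<Longrightarrow> \<bar>f y - f x - (y - x) * g x\<bar> \<le> e * \<bar>y - x\<bar>"
        using has_real_derivative_local_linear[OF der[OF 2] \<open>e > 0\<close>] by blast
      ultimately show ?thesis by blast
    qed (auto intro: exI[of _ 1])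
  qed
  then have "\<exists>d. \<forall>x. d x > 0 \<and> (x \<in> E \<longrightarrow> ball x (d x) \<subseteq> T) \<and>
      (x \<in> S - E \<longrightarrow> (\<forall>y. \<bar>y - x\<bar> < d x \<longrightarrow> \<bar>f y - f x - (y - x) * g x\<bar> \<le> e * \<bar>y - x\<bar>))"
    by (rule choice)
  then show ?thesis using that by blast
qed

lemma abs_continuous_on_tagged_increments:
  fixes f :: "real \<Rightarrow> real"
  assumes "abs_continuous_on a b f" "e > 0"
  obtains \<delta> where "\<delta> > 0"
    "\<And>p q T. p tagged_division_of {a..b} \<Longrightarrow> q \<subseteq> p \<Longrightarrow> \<forall>(x, K)\<in>q. K \<subseteq> T \<Longrightarrow>
      T \<in> lmeasurable \<Longrightarrow> measure lebesgue T < \<delta> \<Longrightarrow> (\<Sum>(x, K)\<in>q. \<bar>f (Sup K) - f (Inf K)\<bar>) < e"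
proof (rule abs_continuous_on_interval_family[OF assms, where 'i = "real \<times> real set"])
  fix \<delta> :: real assume "\<delta> > 0" and small:
    "\<And>(I :: (real \<times> real set) set) u v. finite I \<Longrightarrow> \<forall>i\<in>I. a \<le> u i \<and> u i \<le> v i \<and> v i \<le> b \<Longrightarrow>
      \<forall>i\<in>I. \<forall>j\<in>I. i \<noteq> j \<longrightarrow> u i < v i \<longrightarrow> u j < v j \<longrightarrow> v i \<le> u j \<or> v j \<le> u i \<Longrightarrow>
      (\<Sum>i\<in>I. v i - u i) < \<delta> \<Longrightarrow> (\<Sum>i\<in>I. \<bar>f (v i) - f (u i)\<bar>) < e"
  show thesis
  proof (rule that[OF \<open>\<delta> > 0\<close>])
    fix p q T
    assume p: "p tagged_division_of {a..b}" and "q \<subseteq> p" and in_T: "\<forall>(x, K)\<in>q. K \<subseteq> T"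
      and T: "T \<in> lmeasurable" "measure lebesgue T < \<delta>"
    have fin: "finite q" using finite_subset[OF \<open>q \<subseteq> p\<close> tagged_division_of_finite[OF p]] .
    have inside: "\<forall>z\<in>q. a \<le> Inf (snd z) \<and> Inf (snd z) \<le> Sup (snd z) \<and> Sup (snd z) \<le> b
        \<and> {Inf (snd z)..Sup (snd z)} \<subseteq> T"
    proof
      fix z assume "z \<in> q"
      obtain x K where z: "z = (x, K)" by (cases z)
      with \<open>z \<in> q\<close> have "K \<subseteq> T" "(x, K) \<in> p" using in_T \<open>q \<subseteq> p\<close> by auto
      moreover obtain u v where "K = {u..v}" "u \<le> v" "K \<subseteq> {a..b}"
        using tagged_division_of_realE[OF p \<open>(x, K) \<in> p\<close>] by metis
      ultimately show "a \<le> Inf (snd z) \<and> Inf (snd z) \<le> Sup (snd z) \<and> Sup (snd z) \<le> b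
        \<and> {Inf (snd z)..Sup (snd z)} \<subseteq> T" using z by simp
    qed
    have apart: "\<forall>z\<in>q. \<forall>z'\<in>q. z \<noteq> z' \<longrightarrow> Inf (snd z) < Sup (snd z) \<longrightarrow>
        Inf (snd z') < Sup (snd z') \<longrightarrow> Sup (snd z) \<le> Inf (snd z') \<or> Sup (snd z') \<le> Inf (snd z)"
    proof (intro ballI impI)
      fix z z' assume "z \<in> q" "z' \<in> q" "z \<noteq> z'" "Inf (snd z) < Sup (snd z)" "Inf (snd z') < Sup (snd z')"
      then show "Sup (snd z) \<le> Inf (snd z') \<or> Sup (snd z') \<le> Inf (snd z)"
        using tagged_division_of_real_nonoverlapping[OF p, of "fst z" "snd z" "fst z'" "snd z'"] \<open>q \<subseteq> p\<close>
        by auto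
    qed
    have "(\<Sum>z\<in>q. Sup (snd z) - Inf (snd z)) \<le> measure lebesgue T"
      by (rule sum_nonoverlapping_intervals_le_measure[OF fin _ T(1) apart]) (use inside in blast)
    then show "(\<Sum>(x, K)\<in>q. \<bar>f (Sup K) - f (Inf K)\<bar>) < e"
      using small[OF fin _ apart] inside T(2) by (simp add: split_beta)
  qed
qed

text \<open>Gauge integration: off \<open>E\<close> the gauge comes from differentiability, so the straddle lemma
  bounds each Riemann term; \<open>E\<close> is covered by an open set of small measure, and since \<open>g\<close> is
  replaced by \<open>0\<close> on \<open>E\<close>, tags in \<open>E\<close> contribute only increments of \<open>f\<close> over intervals in that set,
  which absolute continuity makes small.\<close>
theorem fundamental_theorem_of_calculus_abs_continuous:
  fixes f g :: "real \<Rightarrow> real"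
  assumes "a < b" and ac: "abs_continuous_on a b f" and E: "negligible E"
    and der: "\<And>x. x \<in> {a..b} - E \<Longrightarrow> (f has_real_derivative g x) (at x)"
  shows "(g has_integral (f b - f a)) {a..b}"
proof -
  define g0 where "g0 x = (if x \<in> E then 0 else g x)" for x
  have "(g0 has_integral (f b - f a)) {a..b}"
    unfolding has_integral_factor_content_real
  proof (intro allI impI)
    fix e :: real assume "e > 0"
    then have "e * (b - a) / 2 > 0" using \<open>a < b\<close> by simp
    then obtain \<delta> where "\<delta> > 0" and small_increments:
      "\<And>p q T. p tagged_division_of {a..b} \<Longrightarrow> q \<subseteq> p \<Longrightarrow> \<forall>(x, K)\<in>q. K \<subseteq> T \<Longrightarrow>
        T \<in> lmeasurable \<Longrightarrow> measure lebesgue T < \<delta> \<Longrightarrow>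
        (\<Sum>(x, K)\<in>q. \<bar>f (Sup K) - f (Inf K)\<bar>) < e * (b - a) / 2"
      by (rule abs_continuous_on_tagged_increments[OF ac]) (rule that)
    obtain T where T: "open T" "E \<subseteq> T" "T \<in> lmeasurable" "measure lebesgue T < \<delta>"
      using negligible_open_superset[OF E \<open>\<delta> > 0\<close>] by blast
    have "e/2 > 0" using \<open>e > 0\<close> by simp
    then obtain d where d_pos: "\<And>x. d x > 0" and d_E: "\<And>x. x \<in> E \<Longrightarrow> ball x (d x) \<subseteq> T"
      and d_lin: "\<And>x y. x \<in> {a..b} - E \<Longrightarrow> \<bar>y - x\<bar> < d x \<Longrightarrow> \<bar>f y - f x - (y - x) * g x\<bar> \<le> e/2 * \<bar>y - x\<bar>"
      by (rule derivative_gauge[where S = "{a..b}", OF T(1,2) _ der]) (assumption, rule that)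
    show "\<exists>\<gamma>. gauge \<gamma> \<and> (\<forall>p. p tagged_division_of {a..b} \<and> \<gamma> fine p \<longrightarrow>
          norm ((\<Sum>(x,K)\<in>p. measure lborel K *\<^sub>R g0 x) - (f b - f a)) \<le> e * measure lborel {a..b})"
    proof (intro exI conjI allI impI)
      show "gauge (\<lambda>x. ball x (d x))" using d_pos by (simp add: gauge_ball_dependent)
      fix p assume "p tagged_division_of {a..b} \<and> (\<lambda>x. ball x (d x)) fine p"
      then have p: "p tagged_division_of {a..b}" and fine: "(\<lambda>x. ball x (d x)) fine p" by auto
      define pE where "pE = {z \<in> p. fst z \<in> E}"
      have tag_bound: "\<bar>measure lborel K * g0 x - (f (Sup K) - f (Inf K))\<bar>
          \<le> e/2 * measure lborel K + (if x \<in> E then \<bar>f (Sup K) - f (Inf K)\<bar> else 0)"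
        if xK: "(x, K) \<in> p" for x K
      proof (cases "x \<in> E")
        case True
        have "measure lborel K \<ge> 0" by simp
        with True show ?thesis using \<open>e > 0\<close> by (simp add: g0_def abs_minus_commute)
      next
        case False
        obtain u v where "K = {u..v}" "x \<in> K" "K \<subseteq> {a..b}"
          using tagged_division_of_realE[OF p xK] by blast
        with False have "x \<in> {a..b} - E" by auto
        moreover have "K \<subseteq> ball x (d x)" using fine xK by (auto simp: fine_def)
        ultimately show ?thesis
          using tagged_division_of_real_straddle[OF p xK _ d_lin] False by (simp add: g0_def)
      qed
      have "K \<subseteq> T" if "(x, K) \<in> pE" for x K
      proof -
        have "(x, K) \<in> p" "x \<in> E" using that by (simp_all add: pE_def)
        moreover have "K \<subseteq> ball x (d x)" using fine \<open>(x, K) \<in> p\<close> by (auto simp: fine_def)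
        ultimately show "K \<subseteq> T" using d_E[of x] by blast
      qed
      then have "\<forall>(x, K)\<in>pE. K \<subseteq> T" by blast
      then have exceptional: "(\<Sum>(x, K)\<in>pE. \<bar>f (Sup K) - f (Inf K)\<bar>) < e * (b - a) / 2"
        by (intro small_increments[OF p _ _ T(3,4)]) (auto simp: pE_def)
      have "(\<Sum>(x, K)\<in>p. e/2 * measure lborel K) = e/2 * (\<Sum>(x, K)\<in>p. measure lborel K)"
        by (simp add: sum_distrib_left split_beta)
      also have "\<dots> = e/2 * (b - a)"
        using additive_content_tagged_division[of p a b] p \<open>a < b\<close> by simp
      finally have regular: "(\<Sum>(x, K)\<in>p. e/2 * measure lborel K) = e/2 * (b - a)" .
      have "norm ((\<Sum>(x,K)\<in>p. measure lborel K *\<^sub>R g0 x) - (f b - f a))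
          = \<bar>\<Sum>(x,K)\<in>p. measure lborel K * g0 x - (f (Sup K) - f (Inf K))\<bar>"
        using additive_tagged_division_1[OF _ p, of f] \<open>a < b\<close> by (simp add: split_beta sum_subtractf)
      also have "\<dots> \<le> (\<Sum>(x,K)\<in>p. e/2 * measure lborel K + (if x \<in> E then \<bar>f (Sup K) - f (Inf K)\<bar> else 0))"
        by (rule order_trans[OF sum_abs sum_mono]) (use tag_bound in auto)
      also have "\<dots> = e/2 * (b - a) + (\<Sum>(x, K)\<in>pE. \<bar>f (Sup K) - f (Inf K)\<bar>)"
        using regular tagged_division_of_finite[OF p]
        by (simp add: sum.distrib pE_def sum.inter_filter split_beta)
      also have "\<dots> \<le> e * measure lborel {a..b}"
        using exceptional \<open>a < b\<close> by simp
      finally show "norm ((\<Sum>(x,K)\<in>p. measure lborel K *\<^sub>R g0 x) - (f b - f a)) \<le> e * measure lborel {a..b}" .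
    qed
  qed
  then show ?thesis
    by (rule has_integral_spike[OF E, rotated]) (simp add: g0_def)
qed

section \<open>The Peano kernel of the trapezoidal rule\<close>

lemma AE_lebesgue_on_negligible_exception:
  assumes "AE x in lebesgue_on S. P x" "S \<in> sets lebesgue"
  obtains N where "negligible N" "\<And>x. x \<in> S - N \<Longrightarrow> P x"
proof -
  obtain N where N: "\<And>x. x \<in> space (lebesgue_on S) - N \<Longrightarrow> P x" "N \<in> null_sets (lebesgue_on S)"
    using AE_E3[OF assms(1)] by blast
  have "N \<in> null_sets lebesgue" using N(2) null_sets_restrict_space[OF assms(2)] by blast
  then show ?thesis using that[of N] N(1) by (auto simp: negligible_iff_null_sets)
qed

lemma E1_kernel_has_integral:
  fixes f g :: "real \<Rightarrow> real"
  assumes "a < b" and ac: "abs_continuous_on a b f"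
    and der: "AE x in lebesgue_on {a..b}. (f has_real_derivative g x) (at x)"
  shows "((\<lambda>x. (x - (a + b)/2) * g x) has_integral - E1 a b f) {a..b}"
proof -
  define m where "m = (a + b)/2"
  obtain N where N: "negligible N" "\<And>x. x \<in> {a..b} - N \<Longrightarrow> (f has_real_derivative g x) (at x)"
    using AE_lebesgue_on_negligible_exception[OF der] by auto
  have ac_h: "abs_continuous_on a b (\<lambda>x. (x - m) * f x)"
    by (intro abs_continuous_on_mult ac abs_continuous_on_Lipschitz[of 1]) auto
  have der_h: "((\<lambda>y. (y - m) * f y) has_real_derivative f x + (x - m) * g x) (at x)"
    if "x \<in> {a..b} - N" for x
    using DERIV_mult[OF DERIV_diff[OF DERIV_ident DERIV_const] N(2)[OF that], of m] by (simp add: mult.commute)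
  have "((\<lambda>x. f x + (x - m) * g x) has_integral (b - m) * f b - (a - m) * f a) {a..b}"
    using fundamental_theorem_of_calculus_abs_continuous[OF \<open>a < b\<close> ac_h N(1) der_h] by simp
  moreover have "(f has_integral integral {a..b} f) {a..b}"
    using integrable_continuous_interval[OF abs_continuous_on_imp_continuous_on[OF ac]]
    by (simp add: integrable_integral)
  ultimately have "((\<lambda>x. f x + (x - m) * g x - f x) has_integral
      (b - m) * f b - (a - m) * f a - integral {a..b} f) {a..b}"
    by (rule has_integral_diff)
  moreover have "(b - m) * f b - (a - m) * f a - integral {a..b} f = - E1 a b f"
    unfolding E1_def m_def by (simp add: field_simps)
  ultimately show ?thesis by (simp add: m_def)
qed

lemma has_real_derivative_abs:
  fixes x :: real
  assumes "x \<noteq> 0"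
  shows "(abs has_real_derivative sgn x) (at x)"
proof (cases "x > 0")
  case True
  show ?thesis
    by (rule has_field_derivative_transform_within_open[of "\<lambda>y. y" _ _ "{0<..}"]) (use True in auto)
next
  case False
  with assms have "x < 0" by simp
  show ?thesis
    by (rule has_field_derivative_transform_within_open[of "\<lambda>y. - y" _ _ "{..<0}"])
       (use \<open>x < 0\<close> in \<open>auto intro!: derivative_eq_intros\<close>)
qed

lemma has_real_derivative_abs_powr:
  fixes x m r :: real
  assumes "x \<noteq> m"
  shows "((\<lambda>y. \<bar>y - m\<bar> powr r) has_real_derivative r * sgn (x - m) * \<bar>x - m\<bar> powr (r - 1)) (at x)"
proof -
  have "((\<lambda>y. \<bar>y - m\<bar>) has_real_derivative sgn (x - m) * 1) (at x)"
    by (rule DERIV_chain2[OF has_real_derivative_abs, where g = "\<lambda>y. y - m"])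
       (use assms in \<open>auto intro!: derivative_eq_intros\<close>)
  from DERIV_fun_powr[OF this, of r] show ?thesis
    using assms by (simp add: mult_ac)
qed

lemma midpoint_abs_powr_has_integral:
  fixes a b r :: real
  assumes "a < b" "r > 0"
  shows "((\<lambda>x. \<bar>x - (a + b)/2\<bar> powr r) has_integral 2 * ((b - a)/2) powr (r + 1) / (r + 1)) {a..b}"
proof -
  define m where "m = (a + b)/2"
  define F where "F x = (x - m) * \<bar>x - m\<bar> powr r / (r + 1)" for x
  have "((\<lambda>x. \<bar>x - m\<bar> powr r) has_integral F b - F a) {a..b}"
  proof (rule fundamental_theorem_of_calculus_strong[of "{m}"])
    show "continuous_on {a..b} F"
      unfolding F_def using \<open>r > 0\<close> by (intro continuous_intros continuous_on_powr') auto
    fix x assume "x \<in> {a..b} - {m}"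
    then have "x \<noteq> m" by simp
    have "((\<lambda>y. (y - m) * \<bar>y - m\<bar> powr r) has_real_derivative
        1 * \<bar>x - m\<bar> powr r + r * sgn (x - m) * \<bar>x - m\<bar> powr (r - 1) * (x - m)) (at x)"
      by (rule DERIV_mult[OF _ has_real_derivative_abs_powr[OF \<open>x \<noteq> m\<close>]])
         (auto intro!: derivative_eq_intros)
    then have "(F has_real_derivative
        (\<bar>x - m\<bar> powr r + (x - m) * (r * sgn (x - m) * \<bar>x - m\<bar> powr (r - 1))) / (r + 1)) (at x)"
      unfolding F_def by (rule DERIV_cdivide[THEN DERIV_cong]) (simp add: mult_ac)
    moreover have "(x - m) * (r * sgn (x - m) * \<bar>x - m\<bar> powr (r - 1)) = r * \<bar>x - m\<bar> powr r"
    proof -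
      have "(x - m) * sgn (x - m) = \<bar>x - m\<bar>" by (simp add: sgn_if)
      moreover have "\<bar>x - m\<bar> * \<bar>x - m\<bar> powr (r - 1) = \<bar>x - m\<bar> powr r"
        using powr_mult_base[of "\<bar>x - m\<bar>" "r - 1"] by simp
      ultimately show ?thesis by (metis mult.assoc mult.left_commute)
    qed
    moreover have "(\<bar>x - m\<bar> powr r + r * \<bar>x - m\<bar> powr r) / (r + 1) = \<bar>x - m\<bar> powr r"
      using \<open>r > 0\<close> by (simp add: divide_eq_eq algebra_simps)
    ultimately show "(F has_vector_derivative \<bar>x - m\<bar> powr r) (at x)"
      by (simp add: has_real_derivative_iff_has_vector_derivative[symmetric])
  qed (use \<open>a < b\<close> in auto)
  moreover have "F b - F a = 2 * ((b - a)/2) powr (r + 1) / (r + 1)"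
  proof -
    define h where "h = (b - a)/2"
    have "b - m = h" "a - m = - h" "h > 0"
      using \<open>a < b\<close> by (simp_all add: m_def h_def field_simps)
    then have "F b - F a = 2 * (h * h powr r) / (r + 1)"
      unfolding F_def by (simp add: diff_divide_distrib[symmetric])
    then show ?thesis
      using powr_mult_base[of h r] \<open>h > 0\<close> by (simp add: h_def add.commute)
  qed
  ultimately show ?thesis by (simp add: m_def)
qed

section \<open>The upper bounds\<close>

lemma borel_measurable_lebesgue_on_ident [measurable]: "(\<lambda>x::real. x) \<in> borel_measurable (lebesgue_on S)"
  by (intro measurable_restrict_space1 measurable_completion) simp

lemma midpoint_abs_powr_lebesgue_integral:
  fixes a b r :: real
  assumes "a < b" "r > 0"
  shows "integrable (lebesgue_on {a..b}) (\<lambda>x. \<bar>x - (a + b)/2\<bar> powr r)"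
    and "(\<integral>x. \<bar>x - (a + b)/2\<bar> powr r \<partial>lebesgue_on {a..b}) = 2 * ((b - a)/2) powr (r + 1) / (r + 1)"
proof -
  show int: "integrable (lebesgue_on {a..b}) (\<lambda>x. \<bar>x - (a + b)/2\<bar> powr r)"
    using \<open>r > 0\<close> by (intro continuous_imp_integrable_real continuous_on_powr' continuous_intros) auto
  show "(\<integral>x. \<bar>x - (a + b)/2\<bar> powr r \<partial>lebesgue_on {a..b}) = 2 * ((b - a)/2) powr (r + 1) / (r + 1)"
    using lebesgue_integral_eq_integral[OF int] midpoint_abs_powr_has_integral[OF assms] by (simp add: integral_unique)
qed

lemma Holder_inequality_nonneg:
  fixes u v :: "'a \<Rightarrow> real" and P Q :: real
  assumes P: "P > 1" and Q: "Q > 1" and PQ: "1/P + 1/Q = 1"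
    and u [measurable]: "u \<in> borel_measurable M" and u_nonneg: "\<And>x. u x \<ge> 0"
    and u_int: "integrable M (\<lambda>x. u x powr Q)"
    and v [measurable]: "v \<in> borel_measurable M" and v_nonneg: "\<And>x. v x \<ge> 0"
    and v_int: "integrable M (\<lambda>x. v x powr P)"
  shows "integrable M (\<lambda>x. u x * v x)"
    and "(\<integral>x. u x * v x \<partial>M) \<le> (\<integral>x. u x powr Q \<partial>M) powr (1/Q) * (\<integral>x. v x powr P \<partial>M) powr (1/P)"
proof -
  define A where "A = (\<integral>x. u x powr Q \<partial>M)"
  define B where "B = (\<integral>x. v x powr P \<partial>M)"
  have "A \<ge> 0" "B \<ge> 0" unfolding A_def B_def by (simp_all add: integral_nonneg_AE)
  have "integrable M (\<lambda>x. u x * v x) \<and> (\<integral>x. u x * v x \<partial>M) \<le> A powr (1/Q) * B powr (1/P)"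
  proof (cases "A = 0 \<or> B = 0")
    case True
    then have "(AE x in M. u x powr Q = 0) \<or> (AE x in M. v x powr P = 0)"
      using integral_nonneg_eq_0_iff_AE[OF u_int] integral_nonneg_eq_0_iff_AE[OF v_int]
      by (auto simp: A_def B_def)
    then have ae: "AE x in M. u x * v x = 0"
      by (auto elim: eventually_mono)
    have "integrable M (\<lambda>x. u x * v x)" "(\<integral>x. u x * v x \<partial>M) = 0"
      using integrable_cong_AE[OF _ _ ae] integral_cong_AE[OF _ _ ae] by simp_all
    then show ?thesis by simp
  next
    case False
    with \<open>A \<ge> 0\<close> \<open>B \<ge> 0\<close> have "A > 0" "B > 0" by auto
    define \<alpha> where "\<alpha> = A powr (1/Q)"
    define \<beta> where "\<beta> = B powr (1/P)"
    have "\<alpha> > 0" "\<beta> > 0" "\<alpha> powr Q = A" "\<beta> powr P = B"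
      using \<open>A > 0\<close> \<open>B > 0\<close> P Q by (simp_all add: \<alpha>_def \<beta>_def powr_powr)
    define w where "w x = \<alpha> * \<beta> * (u x powr Q / (Q * A) + v x powr P / (P * B))" for x
    have young: "u x * v x \<le> w x" for x
    proof -
      have "(u x / \<alpha>) * (v x / \<beta>) \<le> (u x / \<alpha>) powr Q / Q + (v x / \<beta>) powr P / P"
        using Youngs_inequality[OF Q P _ , of "u x / \<alpha>" "v x / \<beta>"] PQ u_nonneg v_nonneg \<open>\<alpha> > 0\<close> \<open>\<beta> > 0\<close>
        by (simp add: add.commute)
      also have "\<dots> = u x powr Q / (Q * A) + v x powr P / (P * B)"
        using \<open>\<alpha> powr Q = A\<close> \<open>\<beta> powr P = B\<close> u_nonneg v_nonneg by (simp add: powr_divide mult.commute)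
      finally show ?thesis
        using \<open>\<alpha> > 0\<close> \<open>\<beta> > 0\<close> by (simp add: w_def field_simps)
    qed
    have w_int: "integrable M w"
      unfolding w_def using u_int v_int by simp
    have "integrable M (\<lambda>x. u x * v x)"
      by (rule Bochner_Integration.integrable_bound[OF w_int])
         (use u_nonneg v_nonneg in \<open>auto intro!: AE_I2 order_trans[OF young abs_ge_self] simp: abs_mult\<close>)
    moreover have "(\<integral>x. u x * v x \<partial>M) \<le> integral\<^sup>L M w"
      using calculation w_int young by (rule integral_mono)
    moreover have "integral\<^sup>L M w = \<alpha> * \<beta> * (A / (Q * A) + B / (P * B))"
      unfolding w_def A_def B_def using u_int v_int by simp
    moreover have "A / (Q * A) + B / (P * B) = 1"
      using \<open>A > 0\<close> \<open>B > 0\<close> PQ by (simp add: add.commute)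
    ultimately show ?thesis by (simp add: \<alpha>_def \<beta>_def)
  qed
  then show "integrable M (\<lambda>x. u x * v x)"
    and "(\<integral>x. u x * v x \<partial>M) \<le> (\<integral>x. u x powr Q \<partial>M) powr (1/Q) * (\<integral>x. v x powr P \<partial>M) powr (1/P)"
    by (simp_all add: A_def B_def)
qed

lemma abs_E1_le_kernel_integral:
  fixes f g :: "real \<Rightarrow> real"
  assumes "a < b" "abs_continuous_on a b f"
    and "AE x in lebesgue_on {a..b}. (f has_real_derivative g x) (at x)"
    and g [measurable]: "g \<in> borel_measurable (lebesgue_on {a..b})"
    and int: "integrable (lebesgue_on {a..b}) (\<lambda>x. \<bar>x - (a + b)/2\<bar> * \<bar>g x\<bar>)"
  shows "\<bar>E1 a b f\<bar> \<le> (\<integral>x. \<bar>x - (a + b)/2\<bar> * \<bar>g x\<bar> \<partial>lebesgue_on {a..b})"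
proof -
  let ?k = "\<lambda>x. (x - (a + b)/2) * g x"
  have k_int: "integrable (lebesgue_on {a..b}) ?k"
    using int integrable_abs_iff[of ?k] by (simp add: abs_mult)
  have "(\<integral>x. ?k x \<partial>lebesgue_on {a..b}) = - E1 a b f"
    using lebesgue_integral_eq_integral[OF k_int] integral_unique[OF E1_kernel_has_integral[OF assms(1-3)]]
    by simp
  then have "\<bar>E1 a b f\<bar> = \<bar>\<integral>x. ?k x \<partial>lebesgue_on {a..b}\<bar>" by simp
  also have "\<dots> \<le> (\<integral>x. \<bar>?k x\<bar> \<partial>lebesgue_on {a..b})" by (rule integral_abs_bound)
  finally show ?thesis by (simp add: abs_mult)
qed

lemma abs_midpoint_le:
  fixes x a b :: real
  assumes "x \<in> {a..b}"
  shows "\<bar>x - (a + b)/2\<bar> \<le> (b - a)/2"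
  using assms by (auto simp: abs_le_iff field_simps)

lemma trapezoid_bound_L1:
  fixes f g :: "real \<Rightarrow> real"
  assumes "a < b" "abs_continuous_on a b f"
    and "AE x in lebesgue_on {a..b}. (f has_real_derivative g x) (at x)"
    and "memLp 1 a b g"
  shows "\<bar>E1 a b f\<bar> \<le> trap_coeff 1 \<infinity> * Lp_norm 1 a b g * (b - a) powr trap_expo 1 \<infinity>"
proof -
  let ?M = "lebesgue_on {a..b}"
  have g [measurable]: "g \<in> borel_measurable ?M" and g_int: "integrable ?M (\<lambda>x. \<bar>g x\<bar>)"
    using assms(4) by (auto simp: memLp_def)
  have kernel_le: "\<bar>x - (a + b)/2\<bar> * \<bar>g x\<bar> \<le> (b - a)/2 * \<bar>g x\<bar>" if "x \<in> {a..b}" for x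
    by (rule mult_right_mono[OF abs_midpoint_le[OF that]]) simp
  have "AE x in ?M. norm (\<bar>x - (a + b)/2\<bar> * \<bar>g x\<bar>) \<le> norm ((b - a)/2 * \<bar>g x\<bar>)"
    using kernel_le \<open>a < b\<close> by (intro AE_I2) simp
  then have int: "integrable ?M (\<lambda>x. \<bar>x - (a + b)/2\<bar> * \<bar>g x\<bar>)"
    by (intro Bochner_Integration.integrable_bound[OF integrable_mult_right[where c = "(b - a)/2", OF g_int]])
      auto
  have "\<bar>E1 a b f\<bar> \<le> (\<integral>x. \<bar>x - (a + b)/2\<bar> * \<bar>g x\<bar> \<partial>?M)"
    by (rule abs_E1_le_kernel_integral[OF assms(1-3) g int])
  also have "\<dots> \<le> (\<integral>x. (b - a)/2 * \<bar>g x\<bar> \<partial>?M)"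
    using int g_int kernel_le by (intro integral_mono) auto
  also have "\<dots> = trap_coeff 1 \<infinity> * Lp_norm 1 a b g * (b - a) powr trap_expo 1 \<infinity>"
    using \<open>a < b\<close> by (simp add: Lp_norm_def trap_coeff_def trap_expo_def integral_nonneg_AE)
  finally show ?thesis .
qed

lemma Lp_norm_infinity_le:
  assumes "AE x in lebesgue_on {a..b}. \<bar>g x\<bar> \<le> C" "C \<ge> 0"
  shows "Lp_norm \<infinity> a b g \<le> C"
  unfolding Lp_norm_def using assms by (auto intro!: cInf_lower bdd_belowI[of _ 0])

lemma Lp_norm_infinity_essential_bound:
  assumes "memLp \<infinity> a b g"
  shows "AE x in lebesgue_on {a..b}. \<bar>g x\<bar> \<le> Lp_norm \<infinity> a b g"
    and "Lp_norm \<infinity> a b g \<ge> 0"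
proof -
  define S where "S = {C. 0 \<le> C \<and> (AE x in lebesgue_on {a..b}. \<bar>g x\<bar> \<le> C)}"
  have N: "Lp_norm \<infinity> a b g = Inf S" by (simp add: Lp_norm_def S_def)
  obtain C where "AE x in lebesgue_on {a..b}. \<bar>g x\<bar> \<le> C" using assms by (auto simp: memLp_def)
  then have "max C 0 \<in> S" unfolding S_def by (auto elim: eventually_mono)
  then have "S \<noteq> {}" by blast
  have "bdd_below S" unfolding S_def by (rule bdd_belowI[of _ 0]) auto
  show "Lp_norm \<infinity> a b g \<ge> 0" unfolding N using \<open>S \<noteq> {}\<close> by (rule cInf_greatest) (auto simp: S_def)
  have "AE x in lebesgue_on {a..b}. \<bar>g x\<bar> \<le> Inf S + 1 / Suc n" for n
  proof -
    obtain C where "C \<in> S" "C < Inf S + 1 / Suc n"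
      using cInf_less_iff[OF \<open>S \<noteq> {}\<close> \<open>bdd_below S\<close>, of "Inf S + 1 / Suc n"] by auto
    then show ?thesis unfolding S_def by (auto elim: eventually_mono)
  qed
  then have "AE x in lebesgue_on {a..b}. \<forall>n. \<bar>g x\<bar> \<le> Inf S + 1 / Suc n"
    by (simp add: AE_all_countable)
  then show "AE x in lebesgue_on {a..b}. \<bar>g x\<bar> \<le> Lp_norm \<infinity> a b g"
  proof eventually_elim
    case (elim x)
    show ?case
    proof (rule ccontr)
      assume "\<not> \<bar>g x\<bar> \<le> Lp_norm \<infinity> a b g"
      then obtain n where "inverse (real (Suc n)) < \<bar>g x\<bar> - Inf S"
        using reals_Archimedean[of "\<bar>g x\<bar> - Inf S"] N by auto
      then show False using elim[rule_format, of n] by (simp add: field_simps)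
    qed
  qed
qed

lemma trapezoid_bound_Linfinity:
  fixes f g :: "real \<Rightarrow> real"
  assumes "a < b" "abs_continuous_on a b f"
    and "AE x in lebesgue_on {a..b}. (f has_real_derivative g x) (at x)"
    and "memLp \<infinity> a b g"
  shows "\<bar>E1 a b f\<bar> \<le> trap_coeff \<infinity> 1 * Lp_norm \<infinity> a b g * (b - a) powr trap_expo \<infinity> 1"
proof -
  let ?M = "lebesgue_on {a..b}"
  define N where "N = Lp_norm \<infinity> a b g"
  have g [measurable]: "g \<in> borel_measurable ?M" using assms(4) by (auto simp: memLp_def)
  have g_le: "AE x in ?M. \<bar>g x\<bar> \<le> N" and "N \<ge> 0"
    using Lp_norm_infinity_essential_bound[OF assms(4)] by (auto simp: N_def)
  have kernel_int: "integrable ?M (\<lambda>x. \<bar>x - (a + b)/2\<bar>)"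
    and kernel_integral: "(\<integral>x. \<bar>x - (a + b)/2\<bar> \<partial>?M) = ((b - a)/2)^2"
    using midpoint_abs_powr_lebesgue_integral[OF \<open>a < b\<close>, of 1] \<open>a < b\<close> by (auto simp: powr_numeral)
  have kernel_le: "AE x in ?M. \<bar>x - (a + b)/2\<bar> * \<bar>g x\<bar> \<le> \<bar>x - (a + b)/2\<bar> * N"
    using g_le by eventually_elim (auto intro: mult_left_mono)
  have "AE x in ?M. norm (\<bar>x - (a + b)/2\<bar> * \<bar>g x\<bar>) \<le> norm (\<bar>x - (a + b)/2\<bar> * N)"
    using kernel_le by eventually_elim (use \<open>N \<ge> 0\<close> in simp)
  then have int: "integrable ?M (\<lambda>x. \<bar>x - (a + b)/2\<bar> * \<bar>g x\<bar>)"
    by (intro Bochner_Integration.integrable_bound[OF integrable_mult_left[where c = N, OF kernel_int]]) auto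
  have "\<bar>E1 a b f\<bar> \<le> (\<integral>x. \<bar>x - (a + b)/2\<bar> * \<bar>g x\<bar> \<partial>?M)"
    by (rule abs_E1_le_kernel_integral[OF assms(1-3) g int])
  also have "\<dots> \<le> (\<integral>x. \<bar>x - (a + b)/2\<bar> * N \<partial>?M)"
    using int kernel_int kernel_le by (intro integral_mono_AE) auto
  also have "\<dots> = N * ((b - a)/2)^2"
    using kernel_integral by simp
  also have "\<dots> = trap_coeff \<infinity> 1 * Lp_norm \<infinity> a b g * (b - a) powr trap_expo \<infinity> 1"
    using \<open>a < b\<close> by (simp add: N_def trap_coeff_def trap_expo_def powr_numeral power2_eq_square)
  finally show ?thesis .
qed

lemma kernel_Lq_norm_eq:
  fixes a b Q :: real
  assumes "a < b" "Q > 0"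
  shows "(2 * ((b - a)/2) powr (Q + 1) / (Q + 1)) powr (1/Q)
    = 1/2 * (1 / (Q + 1)) powr (1/Q) * (b - a) powr (1 + 1/Q)"
proof -
  define h where "h = (b - a)/2"
  have "h > 0" using assms(1) by (simp add: h_def)
  have "(2 * h powr (Q + 1) / (Q + 1)) powr (1/Q) = 2 powr (1/Q) * (h powr (Q + 1)) powr (1/Q) * (1 / (Q + 1)) powr (1/Q)"
    using \<open>h > 0\<close> assms(2) by (simp add: powr_divide powr_mult)
  also have "(h powr (Q + 1)) powr (1/Q) = h powr (1 + 1/Q)"
    using assms(2) by (simp add: powr_powr field_simps)
  also have "2 powr (1/Q) * h powr (1 + 1/Q) = 1/2 * (2 * h) powr (1 + 1/Q)"
    using \<open>h > 0\<close> by (simp add: powr_mult powr_add)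
  also have "2 * h = b - a" by (simp add: h_def)
  finally show ?thesis by (simp add: h_def mult_ac)
qed

lemma trapezoid_bound_Lp:
  fixes f g :: "real \<Rightarrow> real" and P Q :: real
  assumes "a < b" "abs_continuous_on a b f"
    and "AE x in lebesgue_on {a..b}. (f has_real_derivative g x) (at x)"
    and P: "P > 1" and Q: "Q > 1" and PQ: "1/P + 1/Q = 1"
    and "memLp (ereal P) a b g"
  shows "\<bar>E1 a b f\<bar> \<le> trap_coeff (ereal P) (ereal Q) * Lp_norm (ereal P) a b g
    * (b - a) powr trap_expo (ereal P) (ereal Q)"
proof -
  let ?M = "lebesgue_on {a..b}"
  have g [measurable]: "g \<in> borel_measurable ?M" and g_int: "integrable ?M (\<lambda>x. \<bar>g x\<bar> powr P)"
    using assms(7) by (auto simp: memLp_def)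
  note kernel = midpoint_abs_powr_lebesgue_integral[OF \<open>a < b\<close>, of Q]
  have int: "integrable ?M (\<lambda>x. \<bar>x - (a + b)/2\<bar> * \<bar>g x\<bar>)"
    and Holder: "(\<integral>x. \<bar>x - (a + b)/2\<bar> * \<bar>g x\<bar> \<partial>?M)
      \<le> (\<integral>x. \<bar>x - (a + b)/2\<bar> powr Q \<partial>?M) powr (1/Q) * (\<integral>x. \<bar>g x\<bar> powr P \<partial>?M) powr (1/P)"
    using Holder_inequality_nonneg[OF P Q PQ, of "\<lambda>x. \<bar>x - (a + b)/2\<bar>" ?M "\<lambda>x. \<bar>g x\<bar>"] kernel Q g_int
    by auto
  have "\<bar>E1 a b f\<bar> \<le> (\<integral>x. \<bar>x - (a + b)/2\<bar> * \<bar>g x\<bar> \<partial>?M)"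
    by (rule abs_E1_le_kernel_integral[OF assms(1-3) g int])
  also have "\<dots> \<le> trap_coeff (ereal P) (ereal Q) * Lp_norm (ereal P) a b g
      * (b - a) powr trap_expo (ereal P) (ereal Q)"
    using Holder kernel Q P kernel_Lq_norm_eq[OF \<open>a < b\<close>, of Q]
    by (simp add: Lp_norm_def trap_coeff_def trap_expo_def mult_ac)
  finally show ?thesis .
qed

section \<open>Sharpness\<close>

lemma powr_diff_le:
  fixes s t H r :: real
  assumes "0 \<le> t" "t \<le> s" "s \<le> H" "r \<ge> 1"
  shows "s powr r - t powr r \<le> r * H powr (r - 1) * (s - t)"
proof (cases "t = s")
  case False
  with assms have "t < s" by simp
  have "continuous_on {t..s} (\<lambda>z. z powr r)"
    using assms by (intro continuous_on_powr' continuous_intros) auto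
  moreover have "(\<lambda>z. z powr r) differentiable (at z)" if "t < z" for z
    using has_real_derivative_powr[of z r] that assms(1) real_differentiable_def by force
  ultimately obtain l z where z: "t < z" "z < s" "((\<lambda>z. z powr r) has_real_derivative l) (at z)"
    and diff: "s powr r - t powr r = (s - t) * l"
    using MVT[OF \<open>t < s\<close>] by blast
  have "l = r * z powr (r - 1)"
    using DERIV_unique[OF z(3) has_real_derivative_powr] z assms(1) by simp
  moreover have "z powr (r - 1) \<le> H powr (r - 1)"
    using z assms by (intro powr_mono2) auto
  ultimately show ?thesis
    using diff \<open>t < s\<close> assms(4) by (simp add: mult_left_mono mult.commute)
qed simp

definition centered_power :: "real \<Rightarrow> real \<Rightarrow> real \<Rightarrow> real" where
  "centered_power m r x = \<bar>x - m\<bar> powr r / r"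

definition centered_power_deriv :: "real \<Rightarrow> real \<Rightarrow> real \<Rightarrow> real" where
  "centered_power_deriv m r x = sgn (x - m) * \<bar>x - m\<bar> powr (r - 1)"

lemma abs_centered_power_deriv: "\<bar>centered_power_deriv m r x\<bar> = \<bar>x - m\<bar> powr (r - 1)"
  by (cases "x = m") (auto simp: centered_power_deriv_def abs_mult)

lemma borel_measurable_centered_power_deriv [measurable]:
  "centered_power_deriv m r \<in> borel_measurable (lebesgue_on S)"
  unfolding centered_power_deriv_def by measurable

lemma centered_power_has_real_derivative:
  assumes "r > 0" "x \<noteq> m"
  shows "(centered_power m r has_real_derivative centered_power_deriv m r x) (at x)"
  using DERIV_cdivide[OF has_real_derivative_abs_powr[OF assms(2), of r], where c = r] assms(1)
  unfolding centered_power_def[abs_def] centered_power_deriv_def by simp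

lemma AE_centered_power_has_real_derivative:
  assumes "r > 0"
  shows "AE x in lebesgue_on {a..b}. (centered_power m r has_real_derivative centered_power_deriv m r x) (at x)"
proof -
  have "{m} \<inter> {a..b} \<in> null_sets (lebesgue_on {a..b})"
    by (subst null_sets_restrict_space) (auto simp: negligible_iff_null_sets[symmetric])
  then show ?thesis
    by (rule AE_I') (use centered_power_has_real_derivative[OF assms] in auto)
qed

lemma abs_continuous_on_centered_power:
  assumes "r \<ge> 1"
  shows "abs_continuous_on a b (centered_power m r)"
proof (rule abs_continuous_on_Lipschitz)
  define H where "H = \<bar>a - m\<bar> + \<bar>b - m\<bar>"
  show "H powr (r - 1) \<ge> 0" by simp
  fix x y assume "x \<in> {a..b}" "y \<in> {a..b}"
  then have bounded: "\<bar>x - m\<bar> \<le> H" "\<bar>y - m\<bar> \<le> H" by (auto simp: H_def)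
  have "\<bar>\<bar>y - m\<bar> powr r - \<bar>x - m\<bar> powr r\<bar> \<le> r * H powr (r - 1) * \<bar>\<bar>y - m\<bar> - \<bar>x - m\<bar>\<bar>"
    using powr_diff_le[of "\<bar>x - m\<bar>" "\<bar>y - m\<bar>" H r] powr_diff_le[of "\<bar>y - m\<bar>" "\<bar>x - m\<bar>" H r]
      bounded assms powr_mono2[of r] by (cases "\<bar>x - m\<bar> \<le> \<bar>y - m\<bar>") auto
  also have "\<dots> \<le> r * H powr (r - 1) * \<bar>y - x\<bar>"
    using assms by (intro mult_left_mono) auto
  finally show "\<bar>centered_power m r y - centered_power m r x\<bar> \<le> H powr (r - 1) * \<bar>y - x\<bar>"
    using assms by (simp add: centered_power_def diff_divide_distrib[symmetric] field_simps)
qed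

lemma E1_centered_power:
  assumes "a < b" "r > 0"
  shows "E1 a b (centered_power ((a + b)/2) r) = - (2 * ((b - a)/2) powr (r + 1) / (r + 1))"
proof -
  define h where "h = (b - a)/2"
  have "h > 0" using assms(1) by (simp add: h_def)
  have "(centered_power ((a + b)/2) r has_integral 2 * h powr (r + 1) / (r + 1) / r) {a..b}"
    unfolding centered_power_def h_def by (rule has_integral_divide[OF midpoint_abs_powr_has_integral[OF assms]])
  then have "integral {a..b} (centered_power ((a + b)/2) r) = 2 * h powr (r + 1) / (r + 1) / r"
    by (rule integral_unique)
  moreover have "\<bar>a - (a + b)/2\<bar> = h" "\<bar>b - (a + b)/2\<bar> = h"
    using assms(1) by (auto simp: h_def abs_if field_simps)
  ultimately have "E1 a b (centered_power ((a + b)/2) r) = 2 * h powr (r + 1) / (r + 1) / r - 2 * h powr (r + 1) / r"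
    using powr_mult_base[of h r] \<open>h > 0\<close> by (simp add: E1_def centered_power_def h_def[symmetric] add.commute)
  also have "\<dots> = - (2 * h powr (r + 1) / (r + 1))"
    using assms(2) by (simp add: divide_simps) (simp add: algebra_simps)
  finally show ?thesis by (simp add: h_def)
qed

lemma trapezoid_sharp_Linfinity:
  assumes "a < b" "C < trap_coeff \<infinity> 1"
  shows "\<exists>f g. abs_continuous_on a b f \<and>
    (AE x in lebesgue_on {a..b}. (f has_real_derivative g x) (at x)) \<and> memLp \<infinity> a b g \<and>
    \<bar>E1 a b f\<bar> > C * Lp_norm \<infinity> a b g * (b - a) powr trap_expo \<infinity> 1"
proof (intro exI conjI)
  let ?m = "(a + b)/2"
  show "abs_continuous_on a b (centered_power ?m 1)"
    by (rule abs_continuous_on_centered_power) simp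
  show "AE x in lebesgue_on {a..b}. (centered_power ?m 1 has_real_derivative centered_power_deriv ?m 1 x) (at x)"
    by (rule AE_centered_power_has_real_derivative) simp
  have bound: "\<bar>centered_power_deriv ?m 1 x\<bar> \<le> 1" for x
    by (simp add: abs_centered_power_deriv)
  show g: "memLp \<infinity> a b (centered_power_deriv ?m 1)"
    using bound by (auto simp: memLp_def)
  define N where "N = Lp_norm \<infinity> a b (centered_power_deriv ?m 1)"
  have "0 \<le> N" "N \<le> 1"
    using Lp_norm_infinity_essential_bound(2)[OF g] Lp_norm_infinity_le[OF AE_I2[OF bound]]
    by (simp_all add: N_def)
  have "C * N \<le> max C 0" using \<open>0 \<le> N\<close> \<open>N \<le> 1\<close> by (cases "C \<le> 0") (auto simp: mult_nonpos_nonneg mult_left_le)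
  also have "\<dots> < 1/4" using assms(2) by (simp add: trap_coeff_def)
  finally have less: "C * N * (b - a)\<^sup>2 < (b - a)\<^sup>2 / 4"
    using \<open>a < b\<close> by (simp add: mult_strict_right_mono)
  have E: "\<bar>E1 a b (centered_power ?m 1)\<bar> = (b - a)\<^sup>2 / 4"
    using E1_centered_power[OF \<open>a < b\<close>, of 1] \<open>a < b\<close> by (simp add: powr_numeral power_divide)
  have expo: "(b - a) powr trap_expo \<infinity> 1 = (b - a)\<^sup>2"
    using \<open>a < b\<close> by (simp add: trap_expo_def powr_numeral)
  show "\<bar>E1 a b (centered_power ?m 1)\<bar> > C * Lp_norm \<infinity> a b (centered_power_deriv ?m 1)
      * (b - a) powr trap_expo \<infinity> 1"
    unfolding expo E using less by (simp add: N_def)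
qed

lemma trapezoid_sharp_Lp:
  fixes P Q :: real
  assumes "a < b" and P: "P > 1" and Q: "Q > 1" and PQ: "1/P + 1/Q = 1"
    and "C < trap_coeff (ereal P) (ereal Q)"
  shows "\<exists>f g. abs_continuous_on a b f \<and>
    (AE x in lebesgue_on {a..b}. (f has_real_derivative g x) (at x)) \<and> memLp (ereal P) a b g \<and>
    \<bar>E1 a b f\<bar> > C * Lp_norm (ereal P) a b g * (b - a) powr trap_expo (ereal P) (ereal Q)"
proof (intro exI conjI)
  let ?m = "(a + b)/2"
  let ?M = "lebesgue_on {a..b}"
  define I where "I = 2 * ((b - a)/2) powr (Q + 1) / (Q + 1)"
  have "I > 0" using \<open>a < b\<close> Q by (simp add: I_def)
  have "(Q - 1) * P = Q"
    using PQ P Q by (simp add: field_simps)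
  then have abs_powr: "\<bar>centered_power_deriv ?m Q x\<bar> powr P = \<bar>x - ?m\<bar> powr Q" for x
    by (simp add: abs_centered_power_deriv powr_powr)
  note kernel = midpoint_abs_powr_lebesgue_integral[OF \<open>a < b\<close>, of Q]
  show "abs_continuous_on a b (centered_power ?m Q)"
    by (rule abs_continuous_on_centered_power) (use Q in simp)
  show "AE x in ?M. (centered_power ?m Q has_real_derivative centered_power_deriv ?m Q x) (at x)"
    by (rule AE_centered_power_has_real_derivative) (use Q in simp)
  show "memLp (ereal P) a b (centered_power_deriv ?m Q)"
    using kernel Q by (simp add: memLp_def abs_powr)
  have norm: "Lp_norm (ereal P) a b (centered_power_deriv ?m Q) = I powr (1/P)"
    using kernel Q by (simp add: Lp_norm_def abs_powr I_def)
  have E: "\<bar>E1 a b (centered_power ?m Q)\<bar> = I"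
    using E1_centered_power[OF \<open>a < b\<close>, of Q] Q \<open>I > 0\<close> by (simp add: I_def)
  have coeff: "trap_coeff (ereal P) (ereal Q) * (b - a) powr trap_expo (ereal P) (ereal Q) = I powr (1/Q)"
    using kernel_Lq_norm_eq[OF \<open>a < b\<close>, of Q] P Q by (simp add: trap_coeff_def trap_expo_def I_def)
  have "C * Lp_norm (ereal P) a b (centered_power_deriv ?m Q) * (b - a) powr trap_expo (ereal P) (ereal Q)
      < trap_coeff (ereal P) (ereal Q) * I powr (1/P) * (b - a) powr trap_expo (ereal P) (ereal Q)"
    using assms(5) \<open>I > 0\<close> \<open>a < b\<close> by (simp add: norm)
  also have "\<dots> = I powr (1/P) * I powr (1/Q)"
    using coeff by (simp add: mult_ac)
  also have "\<dots> = \<bar>E1 a b (centered_power ?m Q)\<bar>"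
    using E PQ \<open>I > 0\<close> by (simp add: powr_add[symmetric])
  finally show "\<bar>E1 a b (centered_power ?m Q)\<bar> > C * Lp_norm (ereal P) a b (centered_power_deriv ?m Q)
      * (b - a) powr trap_expo (ereal P) (ereal Q)" .
qed

lemma trapezoid_sharp_L1:
  assumes "a < b" "C < trap_coeff 1 \<infinity>"
  shows "\<exists>f g. abs_continuous_on a b f \<and>
    (AE x in lebesgue_on {a..b}. (f has_real_derivative g x) (at x)) \<and> memLp 1 a b g \<and>
    \<bar>E1 a b f\<bar> > C * Lp_norm 1 a b g * (b - a) powr trap_expo 1 \<infinity>"
proof -
  define c where "c = max C 0"
  have "0 \<le> c" "C \<le> c" "c < 1/2" using assms(2) by (auto simp: c_def trap_coeff_def)
  \<comment> \<open>The ratio of the two sides for exponent \<open>r\<close> is \<open>r / (2 (r + 1))\<close>, which exceeds \<open>c\<close> once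
    \<open>2 c (r + 1) < r\<close>.\<close>
  define d where "d = 1 - 2 * c"
  define r where "r = 1 / d + 1"
  have "d > 0" using \<open>c < 1/2\<close> by (simp add: d_def)
  then have "r > 1" by (simp add: r_def)
  have "r - (1 - d) * (r + 1) = 2 * d"
    using \<open>d > 0\<close> by (simp add: r_def field_simps)
  then have key: "2 * c * (r + 1) < r" using \<open>d > 0\<close> by (simp add: d_def)
  let ?m = "(a + b)/2"
  define h where "h = (b - a)/2"
  define K where "K = h powr (r + 1)"
  have "h > 0" "K > 0" "b - a = 2 * h" using \<open>a < b\<close> by (simp_all add: h_def K_def)
  note kernel = midpoint_abs_powr_lebesgue_integral[OF \<open>a < b\<close>, of "r - 1"]
  show ?thesis
  proof (intro exI conjI)
    show "abs_continuous_on a b (centered_power ?m r)"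
      by (rule abs_continuous_on_centered_power) (use \<open>r > 1\<close> in simp)
    show "AE x in lebesgue_on {a..b}. (centered_power ?m r has_real_derivative centered_power_deriv ?m r x) (at x)"
      by (rule AE_centered_power_has_real_derivative) (use \<open>r > 1\<close> in simp)
    show "memLp 1 a b (centered_power_deriv ?m r)"
      using kernel \<open>r > 1\<close> by (simp add: memLp_def abs_centered_power_deriv)
    have "Lp_norm 1 a b (centered_power_deriv ?m r) = 2 * h powr r / r"
      using kernel \<open>r > 1\<close> by (simp add: Lp_norm_def abs_centered_power_deriv h_def)
    then have "C * Lp_norm 1 a b (centered_power_deriv ?m r) * (b - a) powr trap_expo 1 \<infinity> = C * (4 * K / r)"
      using \<open>h > 0\<close> \<open>b - a = 2 * h\<close> powr_mult_base[of h r] by (simp add: trap_expo_def K_def add.commute mult.commute)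
    also have "\<dots> \<le> c * (4 * K / r)"
      using \<open>C \<le> c\<close> \<open>K > 0\<close> \<open>r > 1\<close> by (intro mult_right_mono) auto
    also have "\<dots> = 2 * K * (2 * c * (r + 1)) / (r * (r + 1))"
      using \<open>r > 1\<close> by (simp add: divide_simps)
    also have "\<dots> < 2 * K * r / (r * (r + 1))"
      using key \<open>K > 0\<close> \<open>r > 1\<close> by (intro divide_strict_right_mono mult_strict_left_mono) auto
    also have "\<dots> = \<bar>E1 a b (centered_power ?m r)\<bar>"
      using E1_centered_power[OF \<open>a < b\<close>, of r] \<open>r > 1\<close> \<open>K > 0\<close> by (simp add: K_def h_def)
    finally show "\<bar>E1 a b (centered_power ?m r)\<bar> > C * Lp_norm 1 a b (centered_power_deriv ?m r)
        * (b - a) powr trap_expo 1 \<infinity>" .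
  qed
qed

lemma conjugate_exponents_cases:
  assumes "conjugate_exponents p q"
  obtains "p = 1" "q = \<infinity>" | "p = \<infinity>" "q = 1"
    | P Q where "p = ereal P" "q = ereal Q" "P > 1" "Q > 1" "1/P + 1/Q = 1"
proof -
  consider "p = 1 \<and> q = \<infinity>" | "p = \<infinity> \<and> q = 1"
    | "1 < p \<and> p < \<infinity> \<and> 1 < q \<and> q < \<infinity> \<and> 1 / real_of_ereal p + 1 / real_of_ereal q = 1"
    using assms unfolding conjugate_exponents_def by blast
  then show thesis
  proof cases
    case 3
    then obtain P Q where "p = ereal P" "q = ereal Q" by (cases p; cases q) auto
    with 3 show thesis using that(3) by auto
  qed (use that in auto)
qed

theorem corollary2p2:
  fixes a b :: real and p q :: ereal
  assumes "a < b" and "conjugate_exponents p q"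
  shows "(\<forall>f g. abs_continuous_on a b f \<and>
              (AE x in lebesgue_on {a..b}. (f has_real_derivative g x) (at x)) \<and>
              memLp p a b g
           \<longrightarrow> \<bar>E1 a b f\<bar> \<le> trap_coeff p q * Lp_norm p a b g * (b - a) powr trap_expo p q)
       \<and> (\<forall>C < trap_coeff p q. \<exists>f g. abs_continuous_on a b f \<and>
              (AE x in lebesgue_on {a..b}. (f has_real_derivative g x) (at x)) \<and>
              memLp p a b g \<and>
              \<bar>E1 a b f\<bar> > C * Lp_norm p a b g * (b - a) powr trap_expo p q)"
  using assms(2)
proof (cases rule: conjugate_exponents_cases)
  case 1
  then show ?thesis using trapezoid_bound_L1[OF \<open>a < b\<close>] trapezoid_sharp_L1[OF \<open>a < b\<close>] by blast
next
  case 2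
  then show ?thesis using trapezoid_bound_Linfinity[OF \<open>a < b\<close>] trapezoid_sharp_Linfinity[OF \<open>a < b\<close>] by blast
next
  case (3 P Q)
  then show ?thesis
    using trapezoid_bound_Lp[OF \<open>a < b\<close> _ _ 3(3-5)] trapezoid_sharp_Lp[OF \<open>a < b\<close> 3(3-5)] by blast
qed

end
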